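(* Let $\Gamma$ be a metrized graph that is a tree with $v$ vertices. For any $p \in V(\Gamma)$, $$\ell(\Gamma) = \sum_{q \in V(\Gamma)}\big(2-\mathrm{val}(q)\big)\,r(p,q).$$ In particular, if each edge length is equal to $1$, $$v-1 = \sum_{q \in V(\Gamma)}\big(2-\mathrm{val}(q)\big)\,r(p,q).$$
   Context: A metrized graph is a finite connected graph each of whose edges is identified with a closed segment of positive length; its vertex set $V(\Gamma)$ is a finite nonempty set containing every point of valence $\neq 2$, and $v=\#V(\Gamma)$. $\mathrm{val}(q)$ is the valence of $q$ (number of directions emanating from $q$). $\ell(\Gamma)$ is the total length. $r(p,q)$ is the effective resistance between $p$ and $q$ (edges as resistors of resistance equal to length), which on a tree equals the path distance. *)

theory Defs
  imports Complex_Main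
begin

text \<open>A metrized graph with vertex set V, edges E (here 2-element subsets of V; a tree
has neither loops nor multiple edges) and edge lengths L.\<close>

definition metrized_graph :: "'a set \<Rightarrow> 'a set set \<Rightarrow> ('a set \<Rightarrow> real) \<Rightarrow> bool" where
  "metrized_graph V E L \<longleftrightarrow> finite V \<and> V \<noteq> {} \<and>
     (\<forall>e\<in>E. \<exists>u v. e = {u, v} \<and> u \<noteq> v \<and> u \<in> V \<and> v \<in> V) \<and>
     (\<forall>e\<in>E. L e > 0)"

definition adj :: "'a set set \<Rightarrow> 'a \<Rightarrow> 'a \<Rightarrow> bool" where
  "adj E u v \<longleftrightarrow> u \<noteq> v \<and> {u, v} \<in> E"

definition connected_graph :: "'a set \<Rightarrow> 'a set set \<Rightarrow> bool" where
  "connected_graph V E \<longleftrightarrow>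
     (\<forall>u\<in>V. \<forall>v\<in>V. (u, v) \<in> {(x, y). adj E x y}\<^sup>*)"

definition is_cycle :: "'a set set \<Rightarrow> 'a list \<Rightarrow> bool" where
  "is_cycle E cs \<longleftrightarrow> length cs \<ge> 3 \<and> distinct cs \<and>
     (\<forall>i < length cs - 1. adj E (cs ! i) (cs ! Suc i)) \<and> adj E (last cs) (hd cs)"

definition is_tree :: "'a set \<Rightarrow> 'a set set \<Rightarrow> bool" where
  "is_tree V E \<longleftrightarrow> connected_graph V E \<and> \<not> (\<exists>cs. is_cycle E cs)"

definition valence :: "'a set set \<Rightarrow> 'a \<Rightarrow> nat" where
  "valence E q = card {e \<in> E. q \<in> e}"

definition total_length :: "'a set set \<Rightarrow> ('a set \<Rightarrow> real) \<Rightarrow> real" where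
  "total_length E L = (\<Sum>e\<in>E. L e)"

definition energy :: "'a set \<Rightarrow> 'a set set \<Rightarrow> ('a set \<Rightarrow> real) \<Rightarrow> ('a \<Rightarrow> real) \<Rightarrow> real" where
  "energy V E L f = (\<Sum>(u, v) \<in> {(u, v). u \<in> V \<and> v \<in> V \<and> adj E u v}.
                       (f u - f v)^2 / L {u, v}) / 2"

text \<open>Effective resistance (edges as resistors of resistance equal to their length),
via Dirichlet's principle: 1/r(p,q) = min energy of a potential with f p = 0, f q = 1.\<close>
definition eff_resistance :: "'a set \<Rightarrow> 'a set set \<Rightarrow> ('a set \<Rightarrow> real) \<Rightarrow> 'a \<Rightarrow> 'a \<Rightarrow> real" where
  "eff_resistance V E L p q =
     (if p = q then 0
      else 1 / (INF f \<in> {f. f p = 0 \<and> f q = 1}. energy V E L f))"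

end

theory Submission
  imports Defs
begin

(* Induction on the number of vertices, removing a leaf x \<noteq> p with neighbour y.
   Effective resistances from p to the remaining vertices do not change, because an optimal
   potential extends to x by its value at y; and r(p,x) = r(p,y) + l(xy) by the series law, since
   a potential with value t at y has energy at least t^2/r(p,y) + (1-t)^2/l(xy) \<ge> 1/(r(p,y) + l(xy)).
   In the sum, x contributes r(p,y) + l(xy) while the valence of y drops by one, which removes
   r(p,y); so both sides grow by l(xy). For unit lengths, l(Gamma) is the number of edges, v - 1. *)

definition pendant_edge :: "'a set set \<Rightarrow> 'a \<Rightarrow> 'a \<Rightarrow> bool" where
  "pendant_edge E x y \<longleftrightarrow> adj E x y \<and> (\<forall>z. adj E x z \<longrightarrow> z = y)"

lemma adj_sym: "adj E u v \<Longrightarrow> adj E v u"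
  by (auto simp: adj_def insert_commute)

lemma adj_in_vertices: "metrized_graph V E L \<Longrightarrow> adj E u v \<Longrightarrow> u \<in> V \<and> v \<in> V"
  unfolding metrized_graph_def adj_def by (metis doubleton_eq_iff)

lemma metrized_graph_edgeE:
  assumes "metrized_graph V E L" "e \<in> E"
  obtains u v where "e = {u, v}" "adj E u v"
  using assms that unfolding metrized_graph_def adj_def by metis

lemma metrized_graph_lengths_nonneg: "metrized_graph V E L \<Longrightarrow> e \<in> E \<Longrightarrow> 0 \<le> L e"
  unfolding metrized_graph_def by (simp add: less_imp_le)

lemma finite_edges: "metrized_graph V E L \<Longrightarrow> finite E"
  by (rule finite_subset[of _ "Pow V"]) (auto simp: metrized_graph_def)

lemma pendant_edge_unique:
  assumes x: "pendant_edge E x y" and uv: "adj E u v" and "x \<in> {u, v}"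
  shows "{u, v} = {x, y}"
proof (cases "u = x")
  case True
  then show ?thesis using x uv unfolding pendant_edge_def by simp
next
  case False
  then have "v = x" using assms(3) by simp
  then have "u = y" using x adj_sym[OF uv] unfolding pendant_edge_def by simp
  then show ?thesis using \<open>v = x\<close> by (simp add: insert_commute)
qed

definition walk :: "'a set set \<Rightarrow> 'a list \<Rightarrow> bool" where
  "walk E ps \<longleftrightarrow> (\<forall>i. Suc i < length ps \<longrightarrow> adj E (ps ! i) (ps ! Suc i))"

lemma walk_snoc:
  assumes "walk E ps" "ps \<noteq> []" "adj E (last ps) z"
  shows "walk E (ps @ [z])"
  unfolding walk_def
proof (intro allI impI)
  fix i assume i: "Suc i < length (ps @ [z])"
  show "adj E ((ps @ [z]) ! i) ((ps @ [z]) ! Suc i)"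
  proof (cases "Suc i < length ps")
    case True
    then show ?thesis using assms(1) by (simp add: walk_def nth_append)
  next
    case False
    then have "i = length ps - 1" using i by simp
    then show ?thesis using assms(2,3) by (simp add: nth_append last_conv_nth)
  qed
qed

lemma walk_drop_is_cycle:
  assumes "walk E ps" "distinct ps" "i + 2 < length ps" "adj E (last ps) (ps ! i)"
  shows "is_cycle E (drop i ps)"
  unfolding is_cycle_def
proof (intro conjI allI impI)
  fix j assume "j < length (drop i ps) - 1"
  then show "adj E (drop i ps ! j) (drop i ps ! Suc j)"
    using assms(1) unfolding walk_def by simp
qed (use assms in \<open>auto simp: hd_drop_conv_nth\<close>)

lemma acyclic_walk_end_pendant:
  assumes acyclic: "\<nexists>cs. is_cycle E cs" and ps: "walk E ps" "distinct ps" "2 \<le> length ps"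
    and closed: "\<And>z. adj E (last ps) z \<Longrightarrow> z \<in> set ps"
  shows "pendant_edge E (last ps) (ps ! (length ps - 2))"
proof -
  define n where "n = length ps"
  have last: "last ps = ps ! (n - 1)"
    using ps(3) unfolding n_def by (subst last_conv_nth) auto
  have n: "Suc (n - 2) < n" "Suc (n - 2) = n - 1" using ps(3) unfolding n_def by auto
  then have "adj E (ps ! (n - 2)) (ps ! Suc (n - 2))"
    using ps(1) unfolding walk_def n_def by blast
  then have "adj E (ps ! (n - 2)) (last ps)" using n(2) last by simp
  then have "adj E (last ps) (ps ! (n - 2))" by (rule adj_sym)
  moreover have "z = ps ! (n - 2)" if z: "adj E (last ps) z" for z
  proof -
    obtain i where i: "i < n" "z = ps ! i"
      using closed[OF z] unfolding n_def by (auto simp: in_set_conv_nth)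
    have "i \<noteq> n - 1" using z i last by (auto simp: adj_def)
    moreover have "\<not> i + 2 < n"
    proof
      assume "i + 2 < n"
      then have "is_cycle E (drop i ps)"
        using walk_drop_is_cycle[OF ps(1,2)] z i(2) unfolding n_def by simp
      then show False using acyclic by blast
    qed
    ultimately have "i = n - 2" using i(1) by linarith
    then show ?thesis using i(2) by simp
  qed
  ultimately show ?thesis unfolding pendant_edge_def n_def[symmetric] by blast
qed

lemma tree_has_pendant_edge:
  assumes m: "metrized_graph V E L" and t: "is_tree V E" and p: "p \<in> V" "V \<noteq> {p}"
  obtains x y where "x \<in> V" "x \<noteq> p" "pendant_edge E x y"
proof -
  obtain w where w: "w \<in> V" "w \<noteq> p" using p by blast
  have "(p, w) \<in> {(x, y). adj E x y}\<^sup>*"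
    using t p w unfolding is_tree_def connected_graph_def by blast
  then obtain z where z: "adj E p z"
    using w(2) by (induct rule: converse_rtrancl_induct) auto
  define P where "P ps \<longleftrightarrow> hd ps = p \<and> distinct ps \<and> set ps \<subseteq> V \<and> walk E ps" for ps
  have Pz: "P [p, z]"
    using z adj_in_vertices[OF m z] unfolding P_def walk_def by (auto simp: adj_def nth_Cons')
  have "length ps < card V + 1" if "P ps" for ps
    using that m unfolding P_def metrized_graph_def
    by (metis card_mono distinct_card less_Suc_eq_le Suc_eq_plus1)
  then obtain ps where Pps: "P ps" and longest: "\<And>qs. P qs \<Longrightarrow> length qs \<le> length ps"
    using ex_has_greatest_nat[of P "[p, z]" length "card V + 1"] Pz by blast
  have len: "2 \<le> length ps" using longest[OF Pz] by simp
  then have ne: "ps \<noteq> []" by auto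
  have closed: "z \<in> set ps" if "adj E (last ps) z" for z
  proof (rule ccontr)
    assume "z \<notin> set ps"
    then have "P (ps @ [z])"
      using Pps that ne adj_in_vertices[OF m that] walk_snoc[of E ps z] unfolding P_def by auto
    then show False using longest by fastforce
  qed
  have "last ps \<noteq> p"
    using Pps len ne unfolding P_def
    by (auto simp: hd_conv_nth last_conv_nth distinct_conv_nth)
  moreover have "last ps \<in> V" using Pps ne unfolding P_def by (meson last_in_set subsetD)
  ultimately show ?thesis
    using that acyclic_walk_end_pendant[OF _ _ _ len closed] Pps t
    unfolding P_def is_tree_def by blast
qed

lemma metrized_graph_remove_pendant:
  assumes m: "metrized_graph V E L" and x: "pendant_edge E x y" "V \<noteq> {x}"
  shows "metrized_graph (V - {x}) (E - {{x, y}}) L"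
  unfolding metrized_graph_def
proof (intro conjI ballI)
  fix e assume e: "e \<in> E - {{x, y}}"
  then obtain u v where uv: "e = {u, v}" "adj E u v" using m by (meson DiffD1 metrized_graph_edgeE)
  have "x \<notin> {u, v}" using pendant_edge_unique[OF x(1) uv(2)] e uv(1) by blast
  then show "\<exists>u v. e = {u, v} \<and> u \<noteq> v \<and> u \<in> V - {x} \<and> v \<in> V - {x}"
    using uv adj_in_vertices[OF m uv(2)] by (auto simp: adj_def)
  show "0 < L e" using e m unfolding metrized_graph_def by blast
qed (use m x(2) in \<open>auto simp: metrized_graph_def\<close>)

lemma reachable_remove_pendant:
  assumes x: "pendant_edge E x y" and uw: "(u, w) \<in> {(a, b). adj E a b}\<^sup>*" and u: "u \<noteq> x"
  shows "(u, if w = x then y else w) \<in> {(a, b). adj (E - {{x, y}}) a b}\<^sup>*"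
  using uw
proof (induction rule: rtrancl_induct)
  case (step w z)
  then have wz: "adj E w z" by simp
  show ?case
  proof (cases "x \<in> {w, z}")
    case True
    then have "{w, z} = {x, y}" using pendant_edge_unique[OF x wz] by blast
    moreover have "w \<noteq> z" using wz by (simp add: adj_def)
    ultimately show ?thesis using step.IH by (auto simp: doubleton_eq_iff)
  next
    case False
    then have "w \<noteq> x" "z \<noteq> x" by auto
    have "adj (E - {{x, y}}) w z" using wz False by (auto simp: adj_def doubleton_eq_iff)
    moreover have "(u, w) \<in> {(a, b). adj (E - {{x, y}}) a b}\<^sup>*"
      using step.IH \<open>w \<noteq> x\<close> by simp
    ultimately have "(u, z) \<in> {(a, b). adj (E - {{x, y}}) a b}\<^sup>*"
      by (simp add: rtrancl.rtrancl_into_rtrancl)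
    then show ?thesis using \<open>z \<noteq> x\<close> by simp
  qed
qed (use u in simp)

lemma is_tree_remove_pendant:
  assumes t: "is_tree V E" and x: "pendant_edge E x y"
  shows "is_tree (V - {x}) (E - {{x, y}})"
proof -
  have "connected_graph (V - {x}) (E - {{x, y}})"
    unfolding connected_graph_def
  proof (intro ballI)
    fix u w assume "u \<in> V - {x}" "w \<in> V - {x}"
    then have "(u, w) \<in> {(a, b). adj E a b}\<^sup>*" "u \<noteq> x" "w \<noteq> x"
      using t unfolding is_tree_def connected_graph_def by auto
    then show "(u, w) \<in> {(a, b). adj (E - {{x, y}}) a b}\<^sup>*"
      using reachable_remove_pendant[OF x] by fastforce
  qed
  moreover have "is_cycle E cs" if "is_cycle (E - {{x, y}}) cs" for cs
    using that unfolding is_cycle_def adj_def by auto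
  ultimately show ?thesis using t unfolding is_tree_def by blast
qed

lemma metrized_tree_pendant_induct [consumes 3, case_names singleton pendant]:
  assumes "metrized_graph V E L" "is_tree V E" "p \<in> V"
    and singleton: "P {p} {}"
    and pendant: "\<And>V E x y. metrized_graph V E L \<Longrightarrow> is_tree V E \<Longrightarrow> p \<in> V \<Longrightarrow>
      x \<noteq> p \<Longrightarrow> pendant_edge E x y \<Longrightarrow> P (V - {x}) (E - {{x, y}}) \<Longrightarrow> P V E"
  shows "P V E"
  using assms(1-3)
proof (induction "card V" arbitrary: V E rule: less_induct)
  case less
  show ?case
  proof (cases "V = {p}")
    case True
    have "E = {}"
    proof (rule equals0I)
      fix e assume "e \<in> E"
      then obtain u v where "adj E u v" by (metis metrized_graph_edgeE[OF less.prems(1)])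
      then show False using adj_in_vertices[OF less.prems(1)] True by (auto simp: adj_def)
    qed
    then show ?thesis using True singleton by simp
  next
    case False
    then obtain x y where x: "x \<in> V" "x \<noteq> p" "pendant_edge E x y"
      using tree_has_pendant_edge[OF less.prems] by blast
    have "card (V - {x}) < card V"
      using x(1) less.prems(1) unfolding metrized_graph_def by (meson card_Diff1_less)
    moreover have "V \<noteq> {x}" using x(2) less.prems(3) by blast
    ultimately have "P (V - {x}) (E - {{x, y}})"
      using less.hyps less.prems x metrized_graph_remove_pendant[OF less.prems(1) x(3)]
        is_tree_remove_pendant[OF less.prems(2) x(3)] by simp
    then show ?thesis by (rule pendant[OF less.prems x(2,3)])
  qed
qed

lemma energy_nonneg: "(\<And>e. e \<in> E \<Longrightarrow> 0 \<le> L e) \<Longrightarrow> 0 \<le> energy V E L f"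
  unfolding energy_def adj_def by (auto intro!: sum_nonneg divide_nonneg_nonneg)

lemma energy_scale: "energy V E L (\<lambda>v. c * f v) = c^2 * energy V E L f"
proof -
  have "(c * f u - c * f v)^2 = c^2 * (f u - f v)^2" for u v
    by (simp add: right_diff_distrib[symmetric] power_mult_distrib)
  then show ?thesis unfolding energy_def by (simp add: case_prod_unfold sum_distrib_left mult.assoc)
qed

lemma energy_fun_upd_outside: "x \<notin> V \<Longrightarrow> energy V E L (f(x := c)) = energy V E L f"
  unfolding energy_def by (auto intro!: sum.cong)

lemma energy_remove_pendant:
  assumes m: "metrized_graph V E L" and x: "pendant_edge E x y"
  shows "energy V E L f = energy (V - {x}) (E - {{x, y}}) L f + (f x - f y)^2 / L {x, y}"
proof -
  let ?S = "\<lambda>V E. {(u, v). u \<in> V \<and> v \<in> V \<and> adj E u v}"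
  define F where "F = (\<lambda>(u, v). (f u - f v)^2 / L {u, v})"
  have xy: "adj E x y" using x by (simp add: pendant_edge_def)
  then have "x \<noteq> y" "x \<in> V" "y \<in> V" using adj_in_vertices[OF m] by (auto simp: adj_def)
  moreover have "(u, v) \<in> ?S V E \<longleftrightarrow> (u, v) \<in> ?S (V - {x}) (E - {{x, y}}) \<union> {(x, y), (y, x)}"
    for u v
    using pendant_edge_unique[OF x, of u v] adj_in_vertices[OF m, of u v] xy adj_sym[OF xy]
    by (auto simp: adj_def doubleton_eq_iff)
  ultimately have split: "?S V E = ?S (V - {x}) (E - {{x, y}}) \<union> {(x, y), (y, x)}"
    "?S (V - {x}) (E - {{x, y}}) \<inter> {(x, y), (y, x)} = {}" by auto
  have "finite (?S (V - {x}) (E - {{x, y}}))"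
    using m unfolding metrized_graph_def by (auto intro: finite_subset[of _ "V \<times> V"])
  then have "sum F (?S V E) = sum F (?S (V - {x}) (E - {{x, y}})) + 2 * ((f x - f y)^2 / L {x, y})"
    unfolding split(1) using split(2) \<open>x \<noteq> y\<close>
    by (simp add: sum.union_disjoint F_def insert_commute power2_commute)
  then show ?thesis unfolding energy_def F_def by simp
qed

definition attains_resistance ::
    "'a set \<Rightarrow> 'a set set \<Rightarrow> ('a set \<Rightarrow> real) \<Rightarrow> 'a \<Rightarrow> 'a \<Rightarrow> real \<Rightarrow> bool" where
  "attains_resistance V E L p q r \<longleftrightarrow> r > 0 \<and>
     (\<exists>g. g p = 0 \<and> g q = 1 \<and> energy V E L g = 1 / r) \<and>
     (\<forall>f. f p = 0 \<longrightarrow> f q = 1 \<longrightarrow> 1 / r \<le> energy V E L f)"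

lemma eff_resistance_eq_attained:
  assumes r: "attains_resistance V E L p q r" and "p \<noteq> q"
  shows "eff_resistance V E L p q = r"
proof -
  obtain g where g: "g p = 0" "g q = 1" "energy V E L g = 1 / r"
    using r unfolding attains_resistance_def by blast
  have "(INF f \<in> {f. f p = 0 \<and> f q = 1}. energy V E L f) = 1 / r"
    using r g unfolding attains_resistance_def by (intro cInf_eq_minimum) (auto intro: image_eqI[of _ _ g])
  then show ?thesis using assms unfolding eff_resistance_def attains_resistance_def by simp
qed

lemma attains_resistance_energy_lower:
  assumes r: "attains_resistance V E L p q r" and L: "\<And>e. e \<in> E \<Longrightarrow> 0 \<le> L e"
    and "f p = 0"
  shows "(f q)^2 / r \<le> energy V E L f"
proof (cases "f q = 0")
  case True
  then show ?thesis using energy_nonneg[OF L] by simp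
next
  case False
  have "1 / r \<le> energy V E L (\<lambda>v. (1 / f q) * f v)"
    using r assms(3) False unfolding attains_resistance_def by simp
  also have "\<dots> = (1 / f q)^2 * energy V E L f" by (rule energy_scale)
  finally show ?thesis using r False unfolding attains_resistance_def by (simp add: field_simps)
qed

lemma series_quadratic_lower:
  fixes r a t :: real assumes "r > 0" "a > 0"
  shows "1 / (r + a) \<le> t^2 / r + (1 - t)^2 / a"
proof -
  have "r * a \<le> (r + a) * (t^2 * a + (1 - t)^2 * r)"
    using sum_squares_ge_zero[of 0 "t * a - (1 - t) * r"] by (simp add: power2_eq_square algebra_simps)
  then show ?thesis using assms by (simp add: field_simps)
qed

lemma series_quadratic_at_min:
  fixes r a :: real assumes "r > 0" "a > 0"
  shows "(r / (r + a))^2 / r + (1 - r / (r + a))^2 / a = 1 / (r + a)"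
proof -
  have ra: "r + a > 0" using assms by simp
  have "1 - r / (r + a) = a / (r + a)" using ra by (simp add: field_simps)
  then have "(r / (r + a))^2 / r + (1 - r / (r + a))^2 / a = r / (r + a)^2 + a / (r + a)^2"
    using assms by (simp add: power2_eq_square)
  also have "\<dots> = 1 / (r + a)" using ra by (simp add: add_divide_distrib[symmetric] power2_eq_square)
  finally show ?thesis .
qed

lemma attains_resistance_pendant_extend:
  assumes m: "metrized_graph V E L" and x: "pendant_edge E x y" "x \<noteq> p" "x \<noteq> q"
    and r: "attains_resistance (V - {x}) (E - {{x, y}}) L p q r"
  shows "attains_resistance V E L p q r"
proof -
  note split = energy_remove_pendant[OF m x(1)]
  obtain g where g: "g p = 0" "g q = 1" "energy (V - {x}) (E - {{x, y}}) L g = 1 / r"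
    using r unfolding attains_resistance_def by blast
  have "x \<noteq> y" using x(1) by (simp add: pendant_edge_def adj_def)
  then have "energy V E L (g(x := g y)) = 1 / r"
    using g(3) by (simp add: split energy_fun_upd_outside)
  moreover have "1 / r \<le> energy V E L f" if "f p = 0" "f q = 1" for f
  proof -
    have "1 / r \<le> energy (V - {x}) (E - {{x, y}}) L f"
      using r that unfolding attains_resistance_def by blast
    moreover have "{x, y} \<in> E" using x(1) by (simp add: pendant_edge_def adj_def)
    then have "0 \<le> (f x - f y)^2 / L {x, y}" using metrized_graph_lengths_nonneg[OF m] by simp
    ultimately show ?thesis by (simp add: split)
  qed
  ultimately show ?thesis
    using r g x unfolding attains_resistance_def by (auto intro!: exI[of _ "g(x := g y)"])
qed

lemma attains_resistance_pendant_root: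
  assumes m: "metrized_graph V E L" and x: "pendant_edge E x p"
  shows "attains_resistance V E L p x (L {x, p})"
proof -
  note split = energy_remove_pendant[OF m x]
  have xp: "{x, p} \<in> E" "x \<noteq> p" using x by (auto simp: pendant_edge_def adj_def)
  then have a: "L {x, p} > 0" using m by (simp add: metrized_graph_def)
  have "energy V E L ((\<lambda>_. 0)(x := 1)) = energy (V - {x}) (E - {{x, p}}) L (\<lambda>_. 0) + 1 / L {x, p}"
    using xp by (simp add: split energy_fun_upd_outside)
  also have "\<dots> = 1 / L {x, p}" by (simp add: energy_def)
  finally have "energy V E L ((\<lambda>_. 0)(x := 1)) = 1 / L {x, p}" .
  moreover have "1 / L {x, p} \<le> energy V E L f" if "f p = 0" "f x = 1" for f
    using that energy_nonneg[of "E - {{x, p}}" L "V - {x}" f] metrized_graph_lengths_nonneg[OF m]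
    by (simp add: split)
  ultimately show ?thesis
    using a xp unfolding attains_resistance_def by (auto intro!: exI[of _ "(\<lambda>_. 0)(x := 1)"])
qed

lemma attains_resistance_pendant_series:
  assumes m: "metrized_graph V E L" and x: "pendant_edge E x y" "x \<noteq> p"
    and r: "attains_resistance (V - {x}) (E - {{x, y}}) L p y r"
  shows "attains_resistance V E L p x (r + L {x, y})"
proof -
  define a where "a = L {x, y}"
  have split: "energy V E L f = energy (V - {x}) (E - {{x, y}}) L f + (f x - f y)^2 / a" for f
    unfolding a_def by (rule energy_remove_pendant[OF m x(1)])
  have xy: "{x, y} \<in> E" "x \<noteq> y" using x(1) by (auto simp: pendant_edge_def adj_def)
  then have "a > 0" using m by (simp add: a_def metrized_graph_def)
  have "r > 0" using r by (simp add: attains_resistance_def)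
  obtain g where g: "g p = 0" "g y = 1" "energy (V - {x}) (E - {{x, y}}) L g = 1 / r"
    using r unfolding attains_resistance_def by blast
  define s where "s = r / (r + a)"
  define h where "h = (\<lambda>v. s * g v)(x := 1)"
  have "energy V E L h = s^2 / r + (1 - s)^2 / a"
    using g xy(2) by (simp add: h_def split energy_fun_upd_outside energy_scale)
  also have "\<dots> = 1 / (r + a)"
    unfolding s_def by (rule series_quadratic_at_min[OF \<open>r > 0\<close> \<open>a > 0\<close>])
  finally have "energy V E L h = 1 / (r + a)" .
  moreover have "h p = 0" "h x = 1" using g x(2) by (auto simp: h_def)
  moreover have "1 / (r + a) \<le> energy V E L f" if "f p = 0" "f x = 1" for f
  proof -
    have "(f y)^2 / r \<le> energy (V - {x}) (E - {{x, y}}) L f"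
      using attains_resistance_energy_lower[OF r, of f] metrized_graph_lengths_nonneg[OF m] that(1)
      by (meson DiffD1)
    then show ?thesis
      using series_quadratic_lower[OF \<open>r > 0\<close> \<open>a > 0\<close>, of "f y"] that(2)
      by (simp add: split power2_commute)
  qed
  ultimately show ?thesis
    using \<open>r > 0\<close> \<open>a > 0\<close> unfolding attains_resistance_def a_def by auto
qed

lemma tree_attains_resistance:
  assumes "metrized_graph V E L" "is_tree V E" "p \<in> V"
  shows "\<forall>q\<in>V. q \<noteq> p \<longrightarrow> (\<exists>r. attains_resistance V E L p q r)"
  using assms
proof (induction rule: metrized_tree_pendant_induct)
  case singleton
  then show ?case by simp
next
  case (pendant V E x y)
  note m = pendant.hyps(1) and x = pendant.hyps(5,4)
  have "\<exists>r. attains_resistance V E L p q r" if q: "q \<in> V" "q \<noteq> p" for q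
  proof (cases "q = x")
    case True
    show ?thesis
    proof (cases "y = p")
      case True
      then show ?thesis using attains_resistance_pendant_root[OF m] x(1) \<open>q = x\<close> by blast
    next
      case False
      have "y \<in> V - {x}" using x(1) adj_in_vertices[OF m] by (auto simp: pendant_edge_def adj_def)
      then obtain r where "attains_resistance (V - {x}) (E - {{x, y}}) L p y r"
        using pendant.IH False by blast
      then show ?thesis using attains_resistance_pendant_series[OF m x] \<open>q = x\<close> by blast
    qed
  next
    case False
    then obtain r where "attains_resistance (V - {x}) (E - {{x, y}}) L p q r"
      using pendant.IH q by blast
    then show ?thesis using attains_resistance_pendant_extend[OF m x not_sym[OF False]] by blast
  qed
  then show ?case by blast
qed

lemma eff_resistance_remove_pendant:
  assumes m: "metrized_graph V E L" and t: "is_tree V E" and p: "p \<in> V"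
    and x: "x \<noteq> p" "pendant_edge E x y" and q: "q \<in> V - {x}"
  shows "eff_resistance V E L p q = eff_resistance (V - {x}) (E - {{x, y}}) L p q"
proof (cases "q = p")
  case False
  have "V \<noteq> {x}" using p x by blast
  then obtain r where r: "attains_resistance (V - {x}) (E - {{x, y}}) L p q r"
    using tree_attains_resistance[OF metrized_graph_remove_pendant[OF m x(2)]
        is_tree_remove_pendant[OF t x(2)]] p x q False by blast
  moreover have "attains_resistance V E L p q r"
    using attains_resistance_pendant_extend[OF m x(2,1) _ r] q by blast
  ultimately show ?thesis using eff_resistance_eq_attained not_sym[OF False] by metis
qed (simp add: eff_resistance_def)

lemma eff_resistance_pendant_vertex:
  assumes m: "metrized_graph V E L" and t: "is_tree V E" and p: "p \<in> V"
    and x: "x \<noteq> p" "pendant_edge E x y"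
  shows "eff_resistance V E L p x = eff_resistance (V - {x}) (E - {{x, y}}) L p y + L {x, y}"
proof (cases "y = p")
  case True
  then have "attains_resistance V E L p x (L {x, p})"
    using attains_resistance_pendant_root[OF m] x(2) by simp
  then show ?thesis using eff_resistance_eq_attained not_sym[OF x(1)] True
    by (simp add: eff_resistance_def[of _ _ _ p p])
next
  case False
  have "y \<in> V - {x}" using x(2) adj_in_vertices[OF m] by (auto simp: pendant_edge_def adj_def)
  moreover have "V \<noteq> {x}" using p x by blast
  ultimately obtain r where r: "attains_resistance (V - {x}) (E - {{x, y}}) L p y r"
    using tree_attains_resistance[OF metrized_graph_remove_pendant[OF m x(2)]
        is_tree_remove_pendant[OF t x(2)]] p x False by blast
  moreover have "attains_resistance V E L p x (r + L {x, y})"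
    by (rule attains_resistance_pendant_series[OF m x(2,1) r])
  ultimately show ?thesis using eff_resistance_eq_attained not_sym[OF x(1)] not_sym[OF False] by metis
qed

lemma valence_pendant:
  assumes m: "metrized_graph V E L" and x: "pendant_edge E x y"
  shows "valence E x = 1"
proof -
  have "{e \<in> E. x \<in> e} = {{x, y}}"
  proof (intro equalityI subsetI)
    fix e assume e: "e \<in> {e \<in> E. x \<in> e}"
    then obtain u v where "e = {u, v}" "adj E u v"
      by (metis (no_types) mem_Collect_eq metrized_graph_edgeE[OF m])
    then show "e \<in> {{x, y}}" using pendant_edge_unique[OF x] e by auto
  qed (use x in \<open>auto simp: pendant_edge_def adj_def\<close>)
  then show ?thesis by (simp add: valence_def)
qed

lemma valence_remove_pendant:
  assumes m: "metrized_graph V E L" and x: "pendant_edge E x y" and q: "q \<noteq> x"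
  shows "valence E q = valence (E - {{x, y}}) q + (if q = y then 1 else 0)"
proof -
  have xy: "{x, y} \<in> E" using x by (simp add: pendant_edge_def adj_def)
  have "{e \<in> E. q \<in> e} = (if q = y then insert {x, y} else id) {e \<in> E - {{x, y}}. q \<in> e}"
    using xy q by auto
  then show ?thesis using finite_edges[OF m] by (simp add: valence_def)
qed

lemma tree_card_edges:
  assumes "metrized_graph V E L" "is_tree V E" "p \<in> V"
  shows "card E + 1 = card V"
  using assms
proof (induction rule: metrized_tree_pendant_induct)
  case (pendant V E x y)
  have "{x, y} \<in> E" "x \<in> V"
    using pendant.hyps(5) adj_in_vertices[OF pendant.hyps(1)] by (auto simp: pendant_edge_def adj_def)
  moreover have "finite V" using pendant.hyps(1) by (simp add: metrized_graph_def)
  ultimately have "card E = Suc (card (E - {{x, y}}))" "card V = Suc (card (V - {x}))"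
    using finite_edges[OF pendant.hyps(1)] by (simp_all only: card_Suc_Diff1)
  then show ?case using pendant.IH by simp
qed simp

lemma tree_total_length_eq_sum:
  assumes "metrized_graph V E L" "is_tree V E" "p \<in> V"
  shows "total_length E L = (\<Sum>q\<in>V. (2 - real (valence E q)) * eff_resistance V E L p q)"
  using assms
proof (induction rule: metrized_tree_pendant_induct)
  case singleton
  then show ?case by (simp add: total_length_def eff_resistance_def)
next
  case (pendant V E x y)
  note m = pendant.hyps(1) and x = pendant.hyps(4,5)
  define V' E' where "V' = V - {x}" and "E' = E - {{x, y}}"
  define r' where "r' = eff_resistance V' E' L p"
  have xy: "{x, y} \<in> E" "x \<in> V" "y \<in> V'"
    using x adj_in_vertices[OF m] by (auto simp: pendant_edge_def adj_def V'_def)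
  have fin: "finite V" "finite E" using m finite_edges[OF m] by (auto simp: metrized_graph_def)
  have summand: "(2 - real (valence E q)) * eff_resistance V E L p q
      = (2 - real (valence E' q)) * r' q - (if q = y then r' q else 0)" if "q \<in> V'" for q
  proof -
    have "eff_resistance V E L p q = r' q"
      using eff_resistance_remove_pendant[OF pendant.hyps, of q] that by (simp add: r'_def V'_def E'_def)
    moreover have "valence E q = valence E' q + (if q = y then 1 else 0)"
      using valence_remove_pendant[OF m x(2)] that by (simp add: V'_def E'_def)
    ultimately show ?thesis by (simp add: algebra_simps)
  qed
  have "(\<Sum>q\<in>V. (2 - real (valence E q)) * eff_resistance V E L p q)
      = (2 - real (valence E x)) * eff_resistance V E L p x
        + (\<Sum>q\<in>V'. (2 - real (valence E q)) * eff_resistance V E L p q)"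
    unfolding V'_def using fin(1) xy(2) by (rule sum.remove)
  also have "\<dots> = (r' y + L {x, y})
      + (\<Sum>q\<in>V'. (2 - real (valence E' q)) * r' q - (if q = y then r' q else 0))"
    using valence_pendant[OF m x(2)] eff_resistance_pendant_vertex[OF pendant.hyps] summand
    by (simp add: V'_def E'_def r'_def)
  also have "\<dots> = total_length E' L + L {x, y}"
    using pendant.IH fin xy by (simp add: sum_subtractf V'_def E'_def r'_def)
  also have "\<dots> = total_length E L"
    unfolding total_length_def E'_def using sum.remove[OF fin(2) xy(1), of L] by simp
  finally show ?case ..
qed

theorem lemma4p1:
  fixes V :: "'a set" and E :: "'a set set" and L :: "'a set \<Rightarrow> real" and p :: 'a
  assumes "metrized_graph V E L" and "is_tree V E" and "p \<in> V"
  shows "total_length E L =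
           (\<Sum>q\<in>V. (2 - real (valence E q)) * eff_resistance V E L p q) \<and>
         ((\<forall>e\<in>E. L e = 1) \<longrightarrow>
           real (card V) - 1 = (\<Sum>q\<in>V. (2 - real (valence E q)) * eff_resistance V E L p q))"
proof -
  have sum: "total_length E L = (\<Sum>q\<in>V. (2 - real (valence E q)) * eff_resistance V E L p q)"
    using tree_total_length_eq_sum[OF assms] .
  have "(\<forall>e\<in>E. L e = 1) \<longrightarrow> total_length E L = real (card V) - 1"
    using tree_card_edges[OF assms] by (simp add: total_length_def flip: of_nat_add)
  then show ?thesis using sum by simp
qed

end
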